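(* Let $S$ be a state of a $1$-dimensional Hegselmann–Krause system with social network $G=(V,E)$ and confidence bound $\varepsilon>0$, and let $c\in\mathbb{R}$. Let $V_\ell=\{v\in V: x_v\le c\}$, $V_r=V\setminus V_\ell$, and $E_{\ell,r}=\{\{u,w\}\in E_I: u\in V_\ell,\ w\in V_r\}$. Then $$\sum_{v\in V}|N_v|\,|m_v|\ \ge\ 2\sum_{\{u,w\}\in E_{\ell,r}}|x_u-x_w|.$$
   Context: A $1$-dimensional Hegselmann–Krause system has a finite undirected graph $G=(V,E)$ (social network), a confidence bound $\varepsilon>0$, and a state given by positions $x_v\in\mathbb{R}$. In a state, $N_v=\{u:\{u,v\}\in E,\ |x_u-x_v|\le\varepsilon\}\cup\{v\}$ is the influencing neighborhood of $v$, $m_v=\frac{1}{|N_v|}\sum_{u\in N_v}(x_u-x_v)$ is its movement, and $E_I=\{\{u,v\}\in E:|x_u-x_v|\le\varepsilon\}$ is the edge set of the influence network. *)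

theory Defs
  imports Complex_Main
begin

definition hk_graph :: "'a set \<Rightarrow> 'a set set \<Rightarrow> bool" where
  "hk_graph V E \<longleftrightarrow> finite V \<and> (\<forall>e\<in>E. \<exists>u w. e = {u, w} \<and> u \<noteq> w \<and> u \<in> V \<and> w \<in> V)"

definition infl_nbhd :: "'a set set \<Rightarrow> real \<Rightarrow> ('a \<Rightarrow> real) \<Rightarrow> 'a \<Rightarrow> 'a set" where
  "infl_nbhd E eps x v = {u. {u, v} \<in> E \<and> \<bar>x u - x v\<bar> \<le> eps} \<union> {v}"

definition movement :: "'a set set \<Rightarrow> real \<Rightarrow> ('a \<Rightarrow> real) \<Rightarrow> 'a \<Rightarrow> real" where
  "movement E eps x v =
     (1 / real (card (infl_nbhd E eps x v))) * (\<Sum>u\<in>infl_nbhd E eps x v. x u - x v)"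

definition infl_edges :: "'a set set \<Rightarrow> real \<Rightarrow> ('a \<Rightarrow> real) \<Rightarrow> 'a set set" where
  "infl_edges E eps x = {e \<in> E. \<forall>u\<in>e. \<forall>w\<in>e. \<bar>x u - x w\<bar> \<le> eps}"

end

theory Submission
  imports Defs
begin

text \<open>With \<open>pull u v = x u - x v\<close> if \<open>u\<close> influences \<open>v\<close> and \<open>0\<close> otherwise, \<open>|N_v| m_v\<close>
  is the total pull on \<open>v\<close>. Pull is antisymmetric, so summed over \<open>V_l\<close> the pulls between
  two vertices of \<open>V_l\<close> cancel and only the pull across the cut \<open>(V_l, V_r)\<close> remains; summed
  over \<open>V_r\<close> the same quantity appears with the opposite sign. Hence \<open>\<Sum>v. |N_v| |m_v|\<close> is at
  least twice the pull across the cut, and since every vertex of \<open>V_r\<close> lies to the right of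
  every vertex of \<open>V_l\<close>, each term of the latter is \<open>|x_u - x_w|\<close>.\<close>

lemma sum_sum_antisym_eq_0:
  fixes g :: "'a \<Rightarrow> 'a \<Rightarrow> 'b::linordered_ab_group_add"
  assumes "\<And>u v. g u v = - g v u"
  shows "(\<Sum>v\<in>A. \<Sum>u\<in>A. g u v) = 0"
proof -
  have "(\<Sum>v\<in>A. \<Sum>u\<in>A. g u v) = (\<Sum>u\<in>A. \<Sum>v\<in>A. - g v u)"
    by (subst sum.swap) (intro sum.cong refl assms)
  also have "\<dots> = - (\<Sum>v\<in>A. \<Sum>u\<in>A. g u v)"
    by (simp add: sum_negf)
  finally show ?thesis
    by simp
qed

lemma sum_antisym_eq_cut:
  fixes g :: "'a \<Rightarrow> 'a \<Rightarrow> 'b::linordered_ab_group_add"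
  assumes "finite V" "L \<subseteq> V" "\<And>u v. g u v = - g v u"
  shows "(\<Sum>v\<in>L. \<Sum>u\<in>V. g u v) = (\<Sum>v\<in>L. \<Sum>u\<in>V - L. g u v)"
proof -
  have "(\<Sum>v\<in>L. \<Sum>u\<in>V. g u v) = (\<Sum>v\<in>L. \<Sum>u\<in>L. g u v) + (\<Sum>v\<in>L. \<Sum>u\<in>V - L. g u v)"
    using assms(1,2) by (simp add: sum.subset_diff[of L V] sum.distrib)
  then show ?thesis
    using sum_sum_antisym_eq_0[of g L, OF assms(3)] by simp
qed

lemma sum_abs_sum_antisym_ge_cut:
  fixes g :: "'a \<Rightarrow> 'a \<Rightarrow> 'b::linordered_idom"
  assumes "finite V" "L \<subseteq> V" "\<And>u v. g u v = - g v u"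
  shows "2 * (\<Sum>v\<in>L. \<Sum>u\<in>V - L. g u v) \<le> (\<Sum>v\<in>V. \<bar>\<Sum>u\<in>V. g u v\<bar>)"
proof -
  let ?cut = "\<Sum>v\<in>L. \<Sum>u\<in>V - L. g u v"
  have into_L: "(\<Sum>v\<in>L. \<Sum>u\<in>V. g u v) = ?cut"
    using assms by (rule sum_antisym_eq_cut)
  have "(\<Sum>v\<in>V - L. \<Sum>u\<in>V. g u v) = (\<Sum>v\<in>V - L. \<Sum>u\<in>L. g u v)"
    using sum_antisym_eq_cut[of V "V - L" g, OF assms(1) _ assms(3)] assms(2)
    by (simp add: double_diff)
  also have "\<dots> = (\<Sum>u\<in>L. \<Sum>v\<in>V - L. - g v u)"
    by (subst sum.swap) (intro sum.cong refl assms(3))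
  also have "\<dots> = - ?cut"
    by (simp add: sum_negf)
  finally have into_complement: "(\<Sum>v\<in>V - L. \<Sum>u\<in>V. g u v) = - ?cut" .
  have "(\<Sum>v\<in>L. \<Sum>u\<in>V. g u v) + (\<Sum>v\<in>V - L. - (\<Sum>u\<in>V. g u v))
      \<le> (\<Sum>v\<in>L. \<bar>\<Sum>u\<in>V. g u v\<bar>) + (\<Sum>v\<in>V - L. \<bar>\<Sum>u\<in>V. g u v\<bar>)"
    by (intro add_mono sum_mono) auto
  also have "\<dots> = (\<Sum>v\<in>V. \<bar>\<Sum>u\<in>V. g u v\<bar>)"
    using assms(1,2) by (simp add: sum.subset_diff[of L V])
  finally show ?thesis
    using into_L into_complement by (simp add: sum_negf)
qed

definition influences :: "'a set set \<Rightarrow> real \<Rightarrow> ('a \<Rightarrow> real) \<Rightarrow> 'a \<Rightarrow> 'a \<Rightarrow> bool" where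
  "influences E eps x u v \<longleftrightarrow> {u, v} \<in> E \<and> \<bar>x u - x v\<bar> \<le> eps"

definition pull :: "'a set set \<Rightarrow> real \<Rightarrow> ('a \<Rightarrow> real) \<Rightarrow> 'a \<Rightarrow> 'a \<Rightarrow> real" where
  "pull E eps x u v = (if influences E eps x u v then x u - x v else 0)"

lemma influences_sym: "influences E eps x u v \<longleftrightarrow> influences E eps x v u"
  by (auto simp: influences_def insert_commute abs_minus_commute)

lemma pull_antisym: "pull E eps x u v = - pull E eps x v u"
  by (simp add: pull_def influences_sym[of E eps x u v])

lemma influences_imp_neighbour:
  assumes "hk_graph V E" "influences E eps x u v"
  shows "u \<in> V" "u \<noteq> v"
proof -
  obtain a b where "{u, v} = {a, b}" "a \<noteq> b" "a \<in> V" "b \<in> V"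
    using assms unfolding hk_graph_def influences_def by blast
  then show "u \<in> V" "u \<noteq> v"
    by (metis doubleton_eq_iff)+
qed

lemma infl_edges_doubleton_iff: "{u, w} \<in> infl_edges E eps x \<longleftrightarrow> influences E eps x u w"
  by (auto simp: infl_edges_def influences_def abs_minus_commute)

lemma infl_nbhd_eq:
  assumes "hk_graph V E"
  shows "infl_nbhd E eps x v = insert v {u \<in> V. influences E eps x u v}"
  using influences_imp_neighbour[OF assms]
  unfolding infl_nbhd_def influences_def by blast

lemma card_infl_nbhd_mult_abs_movement:
  assumes "hk_graph V E"
  shows "real (card (infl_nbhd E eps x v)) * \<bar>movement E eps x v\<bar> = \<bar>\<Sum>u\<in>V. pull E eps x u v\<bar>"
proof -
  let ?N = "{u \<in> V. influences E eps x u v}"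
  have "finite V"
    using assms unfolding hk_graph_def by blast
  then have "finite ?N" "v \<notin> ?N"
    using influences_imp_neighbour(2)[OF assms, of eps x v v] by auto
  then have "real (card (infl_nbhd E eps x v)) * \<bar>movement E eps x v\<bar>
      = \<bar>\<Sum>u\<in>?N. x u - x v\<bar>"
    by (simp add: infl_nbhd_eq[OF assms] movement_def abs_mult)
  also have "(\<Sum>u\<in>?N. x u - x v) = (\<Sum>u\<in>V. pull E eps x u v)"
    using \<open>finite V\<close> by (simp add: pull_def sum.inter_filter)
  finally show ?thesis .
qed

lemma sum_cut_edges_eq_sum_pull:
  fixes x :: "'a \<Rightarrow> real" and c :: real
  assumes "finite V"
  defines "L \<equiv> {v \<in> V. x v \<le> c}"
  shows "(\<Sum>(u, w)\<in>{(u, w). {u, w} \<in> infl_edges E eps x \<and> u \<in> L \<and> w \<in> V - L}. \<bar>x u - x w\<bar>)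
    = (\<Sum>v\<in>L. \<Sum>u\<in>V - L. pull E eps x u v)"
proof -
  have "finite L"
    using assms by simp
  have "{(u, w). {u, w} \<in> infl_edges E eps x \<and> u \<in> L \<and> w \<in> V - L}
      = {p \<in> L \<times> (V - L). case_prod (influences E eps x) p}"
    by (auto simp: infl_edges_doubleton_iff)
  then have "(\<Sum>(u, w)\<in>{(u, w). {u, w} \<in> infl_edges E eps x \<and> u \<in> L \<and> w \<in> V - L}. \<bar>x u - x w\<bar>)
      = (\<Sum>(v, u)\<in>L \<times> (V - L). if influences E eps x v u then \<bar>x v - x u\<bar> else 0)"
    using \<open>finite L\<close> \<open>finite V\<close> by (simp only: sum.inter_filter finite_cartesian_product finite_Diff)
      (auto intro!: sum.cong)
  also have "\<dots> = (\<Sum>v\<in>L. \<Sum>u\<in>V - L. if influences E eps x v u then \<bar>x v - x u\<bar> else 0)"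
    by (rule sum.cartesian_product[symmetric])
  also have "\<dots> = (\<Sum>v\<in>L. \<Sum>u\<in>V - L. pull E eps x u v)"
    by (intro sum.cong refl) (auto simp: L_def pull_def influences_sym)
  finally show ?thesis .
qed

theorem lemma2:
  fixes V :: "'a set" and E :: "'a set set" and eps c :: real and x :: "'a \<Rightarrow> real"
  assumes "hk_graph V E" and "eps > 0"
  defines "Vl \<equiv> {v \<in> V. x v \<le> c}"
  defines "Vr \<equiv> V - Vl"
  defines "Elr \<equiv> {(u, w). {u, w} \<in> infl_edges E eps x \<and> u \<in> Vl \<and> w \<in> Vr}"
  shows "(\<Sum>v\<in>V. real (card (infl_nbhd E eps x v)) * \<bar>movement E eps x v\<bar>)
           \<ge> 2 * (\<Sum>(u, w)\<in>Elr. \<bar>x u - x w\<bar>)"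
proof -
  have "finite V"
    using assms(1) unfolding hk_graph_def by blast
  have "(\<Sum>(u, w)\<in>Elr. \<bar>x u - x w\<bar>) = (\<Sum>v\<in>Vl. \<Sum>u\<in>V - Vl. pull E eps x u v)"
    unfolding Elr_def Vr_def Vl_def using \<open>finite V\<close> by (rule sum_cut_edges_eq_sum_pull)
  also have "2 * \<dots> \<le> (\<Sum>v\<in>V. \<bar>\<Sum>u\<in>V. pull E eps x u v\<bar>)"
    using \<open>finite V\<close> by (rule sum_abs_sum_antisym_ge_cut) (auto simp: Vl_def intro: pull_antisym)
  also have "\<dots> = (\<Sum>v\<in>V. real (card (infl_nbhd E eps x v)) * \<bar>movement E eps x v\<bar>)"
    by (simp add: card_infl_nbhd_mult_abs_movement[OF assms(1)])
  finally show ?thesis .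
qed

end
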